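(* Let $X=\{x\in\{0,1\}^n: Ax\le b\}$ for a real matrix $A$ and vector $b$, and assume the standing assumptions. Suppose $\lambda_i(\pi)\neq0$ for some $i\in I$. Define the target inequality $\tilde\pi^\top x\le\tilde\pi_0$ by $\tilde\pi=e_i,\ \tilde\pi_0=0$ (i.e. $x_i\le 0$) if $i\in S^+(\pi)$, and $\tilde\pi=-e_i,\ \tilde\pi_0=-1$ (i.e. $x_i\ge 1$) if $i\in S^-(\pi)$. Let $$\gamma^*=\min\Big\{\pi_0x_0-\pi^\top x:\ (x,x_0)\in\mathbb{R}^n\times\mathbb{R}_{\ge0},\ Ax-bx_0\le0,\ 0\le x_j\le x_0\ \forall j,\ \big(x_j\le 0 \text{ or } x_j\ge x_0\big)\ \forall j\in I,\ \tilde\pi_0x_0-\tilde\pi^\top x=-1\Big\}.$$ Then $\gamma^*=|\lambda_i(\pi)|$.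
   Context: Let $n\ge1$, $I=\{1,\dots,n\}$, $e_i$ the $i$-th unit vector. Standing assumptions: (a) $\pi^\top x\le\pi_0$ is valid for $X$ and $\pi_0=\max_{x\in X}\pi^\top x$; (b) for every $i\in I$ there exist $x,x'\in X$ with $x_i=0$, $x'_i=1$. $\lambda_i(\pi):=\max_{x\in X}\{\pi^\top x:x_i=0\}-\max_{x\in X}\{\pi^\top x:x_i=1\}$; $S^-(\pi)=\{i:\lambda_i(\pi)<0\}$, $S^+(\pi)=\{i:\lambda_i(\pi)>0\}$. *)

theory Defs
  imports "HOL-Analysis.Analysis"
begin

text \<open>Vectors in R^n are modelled as real^'n for a finite index type 'n
  (so I = UNIV :: 'n set, n = CARD('n) >= 1); A is an m x n real matrix.\<close>

definition binX :: "real^'n^'m \<Rightarrow> real^'m \<Rightarrow> (real^'n) set" where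
  "binX A b = {x. (\<forall>j. x$j = 0 \<or> x$j = 1) \<and> (\<forall>k. (A *v x)$k \<le> b$k)}"

definition lambda_i :: "(real^'n) set \<Rightarrow> real^'n \<Rightarrow> 'n \<Rightarrow> real" where
  "lambda_i X p i =
     Max ((\<lambda>x. p \<bullet> x) ` {x\<in>X. x$i = 0}) - Max ((\<lambda>x. p \<bullet> x) ` {x\<in>X. x$i = 1})"

definition S_minus :: "(real^'n) set \<Rightarrow> real^'n \<Rightarrow> 'n set" where
  "S_minus X p = {i. lambda_i X p i < 0}"

definition S_plus :: "(real^'n) set \<Rightarrow> real^'n \<Rightarrow> 'n set" where
  "S_plus X p = {i. lambda_i X p i > 0}"

definition lift_feasible ::
  "real^'n^'m \<Rightarrow> real^'m \<Rightarrow> real^'n \<Rightarrow> real \<Rightarrow> ((real^'n) \<times> real) set" where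
  "lift_feasible A b pt pt0 = {(x, x0).
      x0 \<ge> 0 \<and>
      (\<forall>k. (A *v x)$k - b$k * x0 \<le> 0) \<and>
      (\<forall>j. 0 \<le> x$j \<and> x$j \<le> x0) \<and>
      (\<forall>j. x$j \<le> 0 \<or> x$j \<ge> x0) \<and>
      pt0 * x0 - pt \<bullet> x = -1}"

end

theory Submission
  imports Defs
begin

(* The disjunctive constraints together with 0 <= x_j <= x_0 force every x_j into
   {0, x_0}; either target normalization then forces x_0 = 1, so the feasible points
   of the lifted problem are exactly the points (x, 1) with x in X on the face
   x_i = 1 (target x_i <= 0) resp. x_i = 0 (target x_i >= 1). Hence
   gamma* = pi_0 - max {pi^T x : x in X, x_i = c}, and since pi_0 is the larger of the
   two face maxima, the sign of lambda_i(pi) decides which face attains it. *)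

lemma finite_binX: "finite (binX (A::real^'n^'m) b)"
proof (rule finite_subset)
  show "binX A b \<subseteq> vec_lambda ` (Pi\<^sub>E UNIV (\<lambda>_. {0::real, 1}))"
  proof
    fix x assume "x \<in> binX A b"
    then have "vec_nth x \<in> Pi\<^sub>E UNIV (\<lambda>_. {0::real, 1})"
      by (auto simp: binX_def)
    then show "x \<in> vec_lambda ` (Pi\<^sub>E UNIV (\<lambda>_. {0::real, 1}))"
      by (metis image_eqI vec_nth_inverse)
  qed
  show "finite (vec_lambda ` (Pi\<^sub>E (UNIV::'n set) (\<lambda>_. {0::real, 1})))"
    by (intro finite_imageI finite_PiE) auto
qed

lemma lift_feasible_coord:
  assumes "(x, x0) \<in> lift_feasible A b pt pt0"
  shows "x$j = 0 \<or> x$j = x0"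
proof -
  from assms have "0 \<le> x$j" "x$j \<le> x0" "x$j \<le> 0 \<or> x$j \<ge> x0"
    by (auto simp: lift_feasible_def)
  then show ?thesis by linarith
qed

lemma lift_feasible_unit_scale_iff:
  "(x, 1) \<in> lift_feasible A b pt pt0 \<longleftrightarrow> x \<in> binX A b \<and> pt0 - pt \<bullet> x = -1"
proof -
  have "(\<forall>j. 0 \<le> x$j \<and> x$j \<le> 1) \<and> (\<forall>j. x$j \<le> 0 \<or> x$j \<ge> 1)
      \<longleftrightarrow> (\<forall>j. x$j = 0 \<or> x$j = 1)"
    by (metis order_antisym order_refl zero_le_one)
  then show ?thesis by (auto simp: lift_feasible_def binX_def)
qed

lemma lift_feasible_axis:
  "lift_feasible A b (axis i 1) 0 = (\<lambda>x. (x, 1)) ` {x \<in> binX A b. x$i = 1}"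
proof -
  have "x0 = 1" if "(x, x0) \<in> lift_feasible A b (axis i 1) 0" for x x0
  proof -
    have "x$i = 1" using that by (simp add: lift_feasible_def inner_axis')
    then show ?thesis using lift_feasible_coord[OF that, of i] by simp
  qed
  then show ?thesis
    by (fastforce simp: lift_feasible_unit_scale_iff inner_axis')
qed

lemma lift_feasible_neg_axis:
  "lift_feasible A b (- axis i 1) (-1) = (\<lambda>x. (x, 1)) ` {x \<in> binX A b. x$i = 0}"
proof -
  have "x0 = 1" if "(x, x0) \<in> lift_feasible A b (- axis i 1) (-1)" for x x0
  proof -
    have "x$i = x0 - 1" using that by (simp add: lift_feasible_def inner_axis')
    then show ?thesis using lift_feasible_coord[OF that, of i] by auto
  qed
  then show ?thesis
    by (fastforce simp: lift_feasible_unit_scale_iff inner_axis')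
qed

lemma Max_binX_split:
  assumes "\<exists>x\<in>binX A b. x$i = 0" and "\<exists>x\<in>binX A b. x$i = 1"
  shows "Max (f ` binX A b) =
           max (Max (f ` {x \<in> binX A b. x$i = 0})) (Max (f ` {x \<in> binX A b. x$i = 1}))"
proof -
  let ?S0 = "{x \<in> binX A b. x$i = 0}" and ?S1 = "{x \<in> binX A b. x$i = 1}"
  have "binX A b = ?S0 \<union> ?S1"
    by (auto simp: binX_def)
  then have "f ` binX A b = f ` ?S0 \<union> f ` ?S1"
    by (metis image_Un)
  moreover have "finite (f ` ?S0)" "finite (f ` ?S1)"
    using finite_binX[of A b] by auto
  moreover have "f ` ?S0 \<noteq> {}" "f ` ?S1 \<noteq> {}"
    using assms by auto
  ultimately show ?thesis
    by (simp add: Max_Un)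
qed

lemma diff_Max_is_min_on_unit_lift:
  fixes f :: "'a \<Rightarrow> real"
  assumes "finite F" and "F \<noteq> {}"
  shows "c - Max (f ` F) \<in> {c * x0 - f x | x x0. (x, x0) \<in> (\<lambda>x. (x, 1)) ` F}
       \<and> (\<forall>(x, x0) \<in> (\<lambda>x. (x, 1)) ` F. c - Max (f ` F) \<le> c * x0 - f x)"
proof
  have "Max (f ` F) \<in> f ` F"
    using assms by (intro Max_in) auto
  then obtain y where "y \<in> F" "Max (f ` F) = f y"
    by blast
  then show "c - Max (f ` F) \<in> {c * x0 - f x | x x0. (x, x0) \<in> (\<lambda>x. (x, 1)) ` F}"
    by (intro CollectI exI[of _ y] exI[of _ 1]) simp
  show "\<forall>(x, x0) \<in> (\<lambda>x. (x, 1)) ` F. c - Max (f ` F) \<le> c * x0 - f x"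
    using assms(1) by simp
qed

theorem proposition1:
  fixes A :: "real^'n^'m" and b :: "real^'m" and p :: "real^'n" and p0 :: real
    and i :: 'n and pt :: "real^'n" and pt0 :: real
  assumes valid: "\<forall>x\<in>binX A b. p \<bullet> x \<le> p0"
    and p0_max: "p0 = Max ((\<lambda>x. p \<bullet> x) ` binX A b)"
    and both: "\<forall>j. (\<exists>x\<in>binX A b. x$j = 0) \<and> (\<exists>x\<in>binX A b. x$j = 1)"
    and nz: "lambda_i (binX A b) p i \<noteq> 0"
    and pt_def: "pt = (if i \<in> S_plus (binX A b) p then axis i 1 else - axis i 1)"
    and pt0_def: "pt0 = (if i \<in> S_plus (binX A b) p then 0 else -1)"
  shows "\<bar>lambda_i (binX A b) p i\<bar> \<in>
           {p0 * x0 - p \<bullet> x | x x0. (x, x0) \<in> lift_feasible A b pt pt0}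
       \<and> (\<forall>(x, x0) \<in> lift_feasible A b pt pt0.
            \<bar>lambda_i (binX A b) p i\<bar> \<le> p0 * x0 - p \<bullet> x)"
proof -
  \<comment> \<open>Hypothesis valid is implied by p0_max and not needed.\<close>
  define face where "face c = {x \<in> binX A b. x$i = c}" for c :: real
  define M where "M c = Max ((\<lambda>x. p \<bullet> x) ` face c)" for c
  have lambda: "lambda_i (binX A b) p i = M 0 - M 1"
    by (simp add: lambda_i_def M_def face_def)
  have "\<exists>x\<in>binX A b. x$i = 0" "\<exists>x\<in>binX A b. x$i = 1"
    using both by auto
  then have p0: "p0 = max (M 0) (M 1)"
    unfolding p0_max M_def face_def by (rule Max_binX_split)
  obtain c where feasible: "lift_feasible A b pt pt0 = (\<lambda>x. (x, 1)) ` face c"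
    and c: "c = 0 \<or> c = 1" and gap: "\<bar>lambda_i (binX A b) p i\<bar> = p0 - M c"
  proof (cases "i \<in> S_plus (binX A b) p")
    case True
    then show ?thesis
      using that[of 1] lambda p0 pt_def pt0_def
      by (simp add: S_plus_def lift_feasible_axis face_def)
  next
    case False
    then show ?thesis
      using that[of 0] lambda p0 nz pt_def pt0_def
      by (simp add: S_plus_def lift_feasible_neg_axis face_def)
  qed
  have "finite (face c)"
    using finite_binX[of A b] by (simp add: face_def)
  moreover have "face c \<noteq> {}"
    using both c by (auto simp: face_def)
  ultimately show ?thesis
    unfolding feasible gap M_def by (rule diff_Max_is_min_on_unit_lift)
qed

end
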